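(* Let $\Lambda=(\alpha,\lambda,f)$ be a twisted $S$-module structure on a semilattice of groups $A$ over an inverse semigroup $S$, and consider the extension $A\overset{i}{\to}A*_\Lambda S\overset{j}{\to}S$. Then $\rho(s)=\alpha(ss^{-1})\delta_s$ is a transversal of $j$, and the twisted $S$-module structure induced by $\rho$ is $(\alpha,\lambda',f)$ where $$\lambda'_s(a)=\lambda_s(a)f(s,s^{-1})^{-1}f(s,\alpha^{-1}(aa^{-1}))f(s\alpha^{-1}(aa^{-1}),s^{-1})\quad(s\in S,\ a\in A).$$
   Context: A semilattice of groups is an inverse semigroup $A$ whose idempotents are central; $A_e=\{a: aa^{-1}=a^{-1}a=e\}$. An endomorphism $\varphi$ of $A$ is relatively invertible if there are $\bar\varphi\in\mathrm{End}\,A$, $e_\varphi\in E(A)$ with $\bar\varphi\varphi(a)=e_\varphi a$, $\varphi\bar\varphi(a)=\varphi(e_\varphi)a$, $e_\varphi$ the identity of $\bar\varphi(A)$, $\varphi(e_\varphi)$ the identity of $\varphi(A)$. A twisted $S$-module structure on $A$ is $(\alpha,\lambda,f)$ with $\alpha:E(S)\to E(A)$ an isomorphism, $s\mapsto\lambda_s$ relatively invertible endomorphisms, $f:S\times S\to A$ with $f(s,t)\in A_{\alpha(stt^{-1}s^{-1})}$, satisfying (i) $\lambda_e(a)=\alpha(e)a$ for $e\in E(S)$; (ii) $\lambda_s(\alpha(e))=\alpha(ses^{-1})$; (iii) $\lambda_s\lambda_t(a)=f(s,t)\lambda_{st}(a)f(s,t)^{-1}$; (iv) $f(se,e)=\alpha(ses^{-1})$,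 $f(e,es)=\alpha(ess^{-1})$; (v) $\lambda_s(f(t,u))f(s,tu)=f(s,t)f(st,u)$. The crossed product $A*_\Lambda S=\{a\delta_s: a\in A,s\in S, aa^{-1}=\alpha(ss^{-1})\}$ with $a\delta_s\cdot b\delta_t=a\lambda_s(b)f(s,t)\delta_{st}$ is an inverse semigroup, and with $i(a)=a\delta_{\alpha^{-1}(aa^{-1})}$, $j(a\delta_s)=s$ it is an extension of $A$ by $S$ (i.e. $i$ is a monomorphism, $j$ an idempotent-separating epimorphism, $i(A)=j^{-1}(E(S))$). A transversal of $j$ is $\rho:S\to A*_\Lambda S$ with $j\circ\rho=\mathrm{id}$ and $\rho(E(S))\subseteq E(A*_\Lambda S)$; the structure it induces is $(\alpha_\rho,\lambda_\rho,f_\rho)$ with $\alpha_\rho=i^{-1}\circ\rho|_{E(S)}$, $(\lambda_\rho)_s(a)=i^{-1}(\rho(s)i(a)\rho(s)^{-1})$, and $f_\rho(s,t)$ the unique element of $A_{\alpha_\rho(stt^{-1}s^{-1})}$ with $\rho(s)\rho(t)=i(f_\rho(s,t))\rho(st)$. *)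

theory Defs
  imports Main
begin

definition semigroup_on :: "'a set \<Rightarrow> ('a \<Rightarrow> 'a \<Rightarrow> 'a) \<Rightarrow> bool" where
  "semigroup_on C m \<longleftrightarrow> (\<forall>x\<in>C. \<forall>y\<in>C. m x y \<in> C) \<and>
     (\<forall>x\<in>C. \<forall>y\<in>C. \<forall>z\<in>C. m (m x y) z = m x (m y z))"

definition inverse_semigroup :: "'a set \<Rightarrow> ('a \<Rightarrow> 'a \<Rightarrow> 'a) \<Rightarrow> bool" where
  "inverse_semigroup C m \<longleftrightarrow> semigroup_on C m \<and>
     (\<forall>x\<in>C. \<exists>!y. y \<in> C \<and> m (m x y) x = x \<and> m (m y x) y = y)"

definition sinv :: "'a set \<Rightarrow> ('a \<Rightarrow> 'a \<Rightarrow> 'a) \<Rightarrow> 'a \<Rightarrow> 'a" where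
  "sinv C m x = (THE y. y \<in> C \<and> m (m x y) x = x \<and> m (m y x) y = y)"

definition idems :: "'a set \<Rightarrow> ('a \<Rightarrow> 'a \<Rightarrow> 'a) \<Rightarrow> 'a set" where
  "idems C m = {e \<in> C. m e e = e}"

definition semilattice_of_groups :: "'a set \<Rightarrow> ('a \<Rightarrow> 'a \<Rightarrow> 'a) \<Rightarrow> bool" where
  "semilattice_of_groups C m \<longleftrightarrow> inverse_semigroup C m \<and>
     (\<forall>e\<in>idems C m. \<forall>x\<in>C. m e x = m x e)"

definition group_part :: "'a set \<Rightarrow> ('a \<Rightarrow> 'a \<Rightarrow> 'a) \<Rightarrow> 'a \<Rightarrow> 'a set" where
  "group_part C m e = {a \<in> C. m a (sinv C m a) = e \<and> m (sinv C m a) a = e}"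

definition endo :: "'a set \<Rightarrow> ('a \<Rightarrow> 'a \<Rightarrow> 'a) \<Rightarrow> ('a \<Rightarrow> 'a) \<Rightarrow> bool" where
  "endo C m \<phi> \<longleftrightarrow> (\<forall>a\<in>C. \<phi> a \<in> C) \<and> (\<forall>a\<in>C. \<forall>b\<in>C. \<phi> (m a b) = m (\<phi> a) (\<phi> b))"

definition is_identity_of :: "('a \<Rightarrow> 'a \<Rightarrow> 'a) \<Rightarrow> 'a set \<Rightarrow> 'a \<Rightarrow> bool" where
  "is_identity_of m X e \<longleftrightarrow> e \<in> X \<and> (\<forall>x\<in>X. m e x = x \<and> m x e = x)"

definition rel_invertible :: "'a set \<Rightarrow> ('a \<Rightarrow> 'a \<Rightarrow> 'a) \<Rightarrow> ('a \<Rightarrow> 'a) \<Rightarrow> bool" where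
  "rel_invertible C m \<phi> \<longleftrightarrow> endo C m \<phi> \<and>
     (\<exists>\<psi> e. endo C m \<psi> \<and> e \<in> idems C m \<and>
        (\<forall>a\<in>C. \<psi> (\<phi> a) = m e a) \<and> (\<forall>a\<in>C. \<phi> (\<psi> a) = m (\<phi> e) a) \<and>
        is_identity_of m (\<psi> ` C) e \<and> is_identity_of m (\<phi> ` C) (\<phi> e))"

definition twisted_module ::
  "'a set \<Rightarrow> ('a \<Rightarrow> 'a \<Rightarrow> 'a) \<Rightarrow> 's set \<Rightarrow> ('s \<Rightarrow> 's \<Rightarrow> 's) \<Rightarrow>
   ('s \<Rightarrow> 'a) \<Rightarrow> ('s \<Rightarrow> 'a \<Rightarrow> 'a) \<Rightarrow> ('s \<Rightarrow> 's \<Rightarrow> 'a) \<Rightarrow> bool" where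
  "twisted_module A mA S mS \<alpha> lam f \<longleftrightarrow>
     bij_betw \<alpha> (idems S mS) (idems A mA) \<and>
     (\<forall>e\<in>idems S mS. \<forall>e'\<in>idems S mS. \<alpha> (mS e e') = mA (\<alpha> e) (\<alpha> e')) \<and>
     (\<forall>s\<in>S. rel_invertible A mA (lam s)) \<and>
     (\<forall>s\<in>S. \<forall>t\<in>S. f s t \<in> group_part A mA
          (\<alpha> (mS (mS (mS s t) (sinv S mS t)) (sinv S mS s)))) \<and>
     (\<forall>e\<in>idems S mS. \<forall>a\<in>A. lam e a = mA (\<alpha> e) a) \<and>
     (\<forall>s\<in>S. \<forall>e\<in>idems S mS. lam s (\<alpha> e) = \<alpha> (mS (mS s e) (sinv S mS s))) \<and>
     (\<forall>s\<in>S. \<forall>t\<in>S. \<forall>a\<in>A.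
          lam s (lam t a) = mA (mA (f s t) (lam (mS s t) a)) (sinv A mA (f s t))) \<and>
     (\<forall>s\<in>S. \<forall>e\<in>idems S mS.
          f (mS s e) e = \<alpha> (mS (mS s e) (sinv S mS s)) \<and>
          f e (mS e s) = \<alpha> (mS (mS e s) (sinv S mS s))) \<and>
     (\<forall>s\<in>S. \<forall>t\<in>S. \<forall>u\<in>S.
          mA (lam s (f t u)) (f s (mS t u)) = mA (f s t) (f (mS s t) u))"

text \<open>Crossed product A *_Lambda S: elements a delta_s are pairs (a, s).\<close>
definition cp_carrier ::
  "'a set \<Rightarrow> ('a \<Rightarrow> 'a \<Rightarrow> 'a) \<Rightarrow> 's set \<Rightarrow> ('s \<Rightarrow> 's \<Rightarrow> 's) \<Rightarrow> ('s \<Rightarrow> 'a) \<Rightarrow> ('a \<times> 's) set" where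
  "cp_carrier A mA S mS \<alpha> =
     {(a, s). a \<in> A \<and> s \<in> S \<and> mA a (sinv A mA a) = \<alpha> (mS s (sinv S mS s))}"

definition cp_mult ::
  "('a \<Rightarrow> 'a \<Rightarrow> 'a) \<Rightarrow> ('s \<Rightarrow> 's \<Rightarrow> 's) \<Rightarrow> ('s \<Rightarrow> 'a \<Rightarrow> 'a) \<Rightarrow> ('s \<Rightarrow> 's \<Rightarrow> 'a) \<Rightarrow>
   ('a \<times> 's) \<Rightarrow> ('a \<times> 's) \<Rightarrow> ('a \<times> 's)" where
  "cp_mult mA mS lam f x y =
     (mA (mA (fst x) (lam (snd x) (fst y))) (f (snd x) (snd y)), mS (snd x) (snd y))"

definition cp_incl ::
  "'a set \<Rightarrow> ('a \<Rightarrow> 'a \<Rightarrow> 'a) \<Rightarrow> 's set \<Rightarrow> ('s \<Rightarrow> 's \<Rightarrow> 's) \<Rightarrow> ('s \<Rightarrow> 'a) \<Rightarrow> 'a \<Rightarrow> 'a \<times> 's" where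
  "cp_incl A mA S mS \<alpha> a = (a, inv_into (idems S mS) \<alpha> (mA a (sinv A mA a)))"

definition transversal ::
  "'c set \<Rightarrow> ('c \<Rightarrow> 'c \<Rightarrow> 'c) \<Rightarrow> 's set \<Rightarrow> ('s \<Rightarrow> 's \<Rightarrow> 's) \<Rightarrow> ('c \<Rightarrow> 's) \<Rightarrow> ('s \<Rightarrow> 'c) \<Rightarrow> bool" where
  "transversal C mC S mS j \<rho> \<longleftrightarrow>
     (\<forall>s\<in>S. \<rho> s \<in> C \<and> j (\<rho> s) = s) \<and> \<rho> ` idems S mS \<subseteq> idems C mC"

definition induced_alpha :: "'a set \<Rightarrow> ('a \<Rightarrow> 'c) \<Rightarrow> ('s \<Rightarrow> 'c) \<Rightarrow> 's \<Rightarrow> 'a" where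
  "induced_alpha A i \<rho> e = inv_into A i (\<rho> e)"

definition induced_lambda ::
  "'a set \<Rightarrow> 'c set \<Rightarrow> ('c \<Rightarrow> 'c \<Rightarrow> 'c) \<Rightarrow> ('a \<Rightarrow> 'c) \<Rightarrow> ('s \<Rightarrow> 'c) \<Rightarrow> 's \<Rightarrow> 'a \<Rightarrow> 'a" where
  "induced_lambda A C mC i \<rho> s a = inv_into A i (mC (mC (\<rho> s) (i a)) (sinv C mC (\<rho> s)))"

definition induced_f ::
  "'a set \<Rightarrow> ('a \<Rightarrow> 'a \<Rightarrow> 'a) \<Rightarrow> 's set \<Rightarrow> ('s \<Rightarrow> 's \<Rightarrow> 's) \<Rightarrow> 'c set \<Rightarrow> ('c \<Rightarrow> 'c \<Rightarrow> 'c) \<Rightarrow>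
   ('a \<Rightarrow> 'c) \<Rightarrow> ('s \<Rightarrow> 'c) \<Rightarrow> 's \<Rightarrow> 's \<Rightarrow> 'a" where
  "induced_f A mA S mS C mC i \<rho> s t =
     (THE x. x \<in> group_part A mA
               (induced_alpha A i \<rho> (mS (mS (mS s t) (sinv S mS t)) (sinv S mS s))) \<and>
             mC (\<rho> s) (\<rho> t) = mC (i x) (\<rho> (mS s t)))"

end

theory Submission
  imports Defs
begin

text \<open>
  The inverse of \<open>\<rho>(s) = \<alpha>(ss\<inverse>)\<delta>\<^sub>s\<close> in the crossed product is
  \<open>f(s\<inverse>,s)\<inverse>\<delta>\<^bsub>s\<inverse>\<^esub>\<close>: the cocycle identity at \<open>(s,s\<inverse>,s)\<close> together with the
  normalisation of \<open>f\<close> gives \<open>\<lambda>\<^sub>s(f(s\<inverse>,s)) = f(s,s\<inverse>)\<close>.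
  Writing \<open>e = \<alpha>\<inverse>(aa\<inverse>)\<close>, so that \<open>i(a) = a\<delta>\<^sub>e\<close>, one then computes
  \<open>\<rho>(s)i(a)\<rho>(s)\<inverse> = \<alpha>(ss\<inverse>)\<lambda>\<^sub>s(a)f(s,e)\<lambda>\<^bsub>se\<^esub>(f(s\<inverse>,s)\<inverse>)f(se,s\<inverse>)\<close>, and the
  twisting rule for \<open>\<lambda>\<^sub>s\<lambda>\<^sub>e\<close> turns \<open>f(s,e)\<lambda>\<^bsub>se\<^esub>(f(s\<inverse>,s)\<inverse>)\<close> into
  \<open>f(s,s\<inverse>)\<inverse>f(s,e)\<close> up to central idempotents.
  The cocycle is recovered because \<open>\<rho>(s)\<rho>(t) = f(s,t)\<delta>\<^bsub>st\<^esub> = i(f(s,t))\<rho>(st)\<close>.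
  Inverses in the crossed product are computed from the definition of \<open>sinv\<close>
  by a direct uniqueness argument.
\<close>

lemma sinv_eqI:
  assumes "y \<in> C" "m (m x y) x = x" "m (m y x) y = y"
    and "\<And>z. z \<in> C \<Longrightarrow> m (m x z) x = x \<Longrightarrow> m (m z x) z = z \<Longrightarrow> z = y"
  shows "sinv C m x = y"
  unfolding sinv_def by (rule the_equality) (use assms in blast)+

locale inverse_semigroup_on =
  fixes C :: "'a set" and m :: "'a \<Rightarrow> 'a \<Rightarrow> 'a" (infixl "\<cdot>" 70)
  assumes inverse_semigroup: "inverse_semigroup C m"
begin

abbreviation iv :: "'a \<Rightarrow> 'a" where "iv \<equiv> sinv C m"

lemma mult_closed [simp]: "x \<in> C \<Longrightarrow> y \<in> C \<Longrightarrow> x \<cdot> y \<in> C"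
  using inverse_semigroup unfolding inverse_semigroup_def semigroup_on_def by blast

lemma mult_assoc: "x \<in> C \<Longrightarrow> y \<in> C \<Longrightarrow> z \<in> C \<Longrightarrow> x \<cdot> y \<cdot> z = x \<cdot> (y \<cdot> z)"
  using inverse_semigroup unfolding inverse_semigroup_def semigroup_on_def by blast

lemma sinv_spec:
  assumes "x \<in> C"
  shows "iv x \<in> C \<and> x \<cdot> iv x \<cdot> x = x \<and> iv x \<cdot> x \<cdot> iv x = iv x"
proof -
  have "\<exists>!y. y \<in> C \<and> x \<cdot> y \<cdot> x = x \<and> y \<cdot> x \<cdot> y = y"
    using inverse_semigroup assms unfolding inverse_semigroup_def by blast
  from theI'[OF this] show ?thesis unfolding sinv_def .
qed

lemma sinv_closed [simp]: "x \<in> C \<Longrightarrow> iv x \<in> C"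
  using sinv_spec by blast

lemma mult_sinv_mult [simp]: "x \<in> C \<Longrightarrow> x \<cdot> iv x \<cdot> x = x"
  using sinv_spec by blast

lemma sinv_mult_sinv [simp]: "x \<in> C \<Longrightarrow> iv x \<cdot> x \<cdot> iv x = iv x"
  using sinv_spec by blast

lemma sinv_unique:
  assumes "x \<in> C" "y \<in> C" "x \<cdot> y \<cdot> x = x" "y \<cdot> x \<cdot> y = y"
  shows "iv x = y"
proof -
  have "\<exists>!y. y \<in> C \<and> x \<cdot> y \<cdot> x = x \<and> y \<cdot> x \<cdot> y = y"
    using inverse_semigroup assms unfolding inverse_semigroup_def by blast
  then show ?thesis
    unfolding sinv_def by (rule the1_equality) (use assms in blast)
qed

lemma mult_sinv_mult': "x \<in> C \<Longrightarrow> x \<cdot> (iv x \<cdot> x) = x"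
  by (metis mult_assoc mult_sinv_mult sinv_closed)

lemma sinv_mult_sinv': "x \<in> C \<Longrightarrow> iv x \<cdot> (x \<cdot> iv x) = iv x"
  by (metis mult_assoc sinv_mult_sinv sinv_closed)

lemma mult_sinv_mult_cancel: "x \<in> C \<Longrightarrow> z \<in> C \<Longrightarrow> x \<cdot> (iv x \<cdot> (x \<cdot> z)) = x \<cdot> z"
  by (metis mult_assoc mult_closed sinv_closed mult_sinv_mult')

lemma sinv_mult_sinv_cancel: "x \<in> C \<Longrightarrow> z \<in> C \<Longrightarrow> iv x \<cdot> (x \<cdot> (iv x \<cdot> z)) = iv x \<cdot> z"
  by (metis mult_assoc mult_closed sinv_closed sinv_mult_sinv')

lemma sinv_sinv [simp]: "x \<in> C \<Longrightarrow> iv (iv x) = x"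
  by (rule sinv_unique) auto

lemma idemsI: "e \<in> C \<Longrightarrow> e \<cdot> e = e \<Longrightarrow> e \<in> idems C m"
  by (simp add: idems_def)

lemma idemsD: "e \<in> idems C m \<Longrightarrow> e \<in> C \<and> e \<cdot> e = e"
  by (simp add: idems_def)

lemma sinv_idem: "e \<in> idems C m \<Longrightarrow> iv e = e"
  by (rule sinv_unique) (auto dest: idemsD)

lemma mult_sinv_idem: "x \<in> C \<Longrightarrow> x \<cdot> iv x \<in> idems C m"
  by (rule idemsI) (auto simp: mult_assoc mult_sinv_mult'[symmetric] sinv_mult_sinv')

lemma sinv_mult_idem: "x \<in> C \<Longrightarrow> iv x \<cdot> x \<in> idems C m"
  by (rule idemsI) (auto simp: mult_assoc mult_sinv_mult' sinv_mult_sinv')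

lemma idem_mult_absorb: "e \<in> C \<Longrightarrow> e \<cdot> e = e \<Longrightarrow> z \<in> C \<Longrightarrow> e \<cdot> (e \<cdot> z) = e \<cdot> z"
  by (metis mult_assoc)

text \<open>
  The inverse of \<open>ef\<close> is \<open>f(ef)\<inverse>e\<close>, which is idempotent; an idempotent is its
  own inverse.
\<close>
lemma idem_mult_idem:
  assumes e: "e \<in> idems C m" and f: "f \<in> idems C m"
  shows "e \<cdot> f \<in> idems C m"
proof -
  have eC: "e \<in> C" "e \<cdot> e = e" and fC: "f \<in> C" "f \<cdot> f = f"
    using e f by (auto dest: idemsD)
  define a where "a = e \<cdot> f"
  define x where "x = iv a"
  have aC: "a \<in> C" and xC: "x \<in> C" using eC fC a_def x_def by simp_all
  have axa: "a \<cdot> x \<cdot> a = a" and xax: "x \<cdot> a \<cdot> x = x"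
    using sinv_spec[OF aC] x_def by auto
  define y where "y = f \<cdot> x \<cdot> e"
  have yC: "y \<in> C" using y_def xC eC fC by simp
  have "a \<cdot> y \<cdot> a = a \<cdot> x \<cdot> a"
    using eC fC xC by (simp add: a_def y_def mult_assoc idem_mult_absorb)
  then have 1: "a \<cdot> y \<cdot> a = a" using axa by simp
  have "y \<cdot> a \<cdot> y = f \<cdot> (x \<cdot> a \<cdot> x) \<cdot> e"
    using eC fC xC by (simp add: a_def y_def mult_assoc idem_mult_absorb)
  then have 2: "y \<cdot> a \<cdot> y = y" using xax y_def by simp
  have xy: "x = y" using sinv_unique[OF aC yC 1 2] x_def by simp
  have "y \<cdot> y = f \<cdot> (x \<cdot> a \<cdot> x) \<cdot> e"
    using eC fC xC by (simp add: a_def y_def mult_assoc idem_mult_absorb)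
  also have "\<dots> = y" using xax y_def by simp
  finally have xx: "x \<cdot> x = x" using xy by simp
  have "a = x"
    using sinv_idem[OF idemsI[OF xC xx]] x_def aC by simp
  then show ?thesis using xx xC a_def by (simp add: idemsI)
qed

lemma idems_commute:
  assumes e: "e \<in> idems C m" and f: "f \<in> idems C m"
  shows "e \<cdot> f = f \<cdot> e"
proof -
  have eC: "e \<in> C" "e \<cdot> e = e" and fC: "f \<in> C" "f \<cdot> f = f"
    using e f by (auto dest: idemsD)
  have ef: "e \<cdot> f \<in> idems C m" and fe: "f \<cdot> e \<in> idems C m"
    using idem_mult_idem e f by auto
  have "e \<cdot> f \<cdot> (f \<cdot> e) \<cdot> (e \<cdot> f) = e \<cdot> f \<cdot> (e \<cdot> f)"
    using eC fC by (simp add: mult_assoc idem_mult_absorb)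
  then have 1: "e \<cdot> f \<cdot> (f \<cdot> e) \<cdot> (e \<cdot> f) = e \<cdot> f" using ef by (auto dest: idemsD)
  have "f \<cdot> e \<cdot> (e \<cdot> f) \<cdot> (f \<cdot> e) = f \<cdot> e \<cdot> (f \<cdot> e)"
    using eC fC by (simp add: mult_assoc idem_mult_absorb)
  then have 2: "f \<cdot> e \<cdot> (e \<cdot> f) \<cdot> (f \<cdot> e) = f \<cdot> e" using fe by (auto dest: idemsD)
  have "iv (e \<cdot> f) = f \<cdot> e" using sinv_unique[OF _ _ 1 2] eC fC by simp
  then show ?thesis using sinv_idem[OF ef] by simp
qed

lemma sinv_mult:
  assumes "x \<in> C" "y \<in> C"
  shows "iv (x \<cdot> y) = iv y \<cdot> iv x"
proof (rule sinv_unique)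
  have c: "y \<cdot> iv y \<cdot> (iv x \<cdot> x) = iv x \<cdot> x \<cdot> (y \<cdot> iv y)"
    using idems_commute mult_sinv_idem sinv_mult_idem assms by blast
  have "x \<cdot> y \<cdot> (iv y \<cdot> iv x) \<cdot> (x \<cdot> y) = x \<cdot> (y \<cdot> iv y \<cdot> (iv x \<cdot> x)) \<cdot> y"
    using assms by (simp add: mult_assoc)
  also have "\<dots> = x \<cdot> (iv x \<cdot> x \<cdot> (y \<cdot> iv y)) \<cdot> y" using c by simp
  also have "\<dots> = (x \<cdot> (iv x \<cdot> x)) \<cdot> (y \<cdot> (iv y \<cdot> y))" using assms by (simp add: mult_assoc)
  finally show "x \<cdot> y \<cdot> (iv y \<cdot> iv x) \<cdot> (x \<cdot> y) = x \<cdot> y"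
    using mult_sinv_mult' assms by simp
  have "iv y \<cdot> iv x \<cdot> (x \<cdot> y) \<cdot> (iv y \<cdot> iv x) = iv y \<cdot> (iv x \<cdot> x \<cdot> (y \<cdot> iv y)) \<cdot> iv x"
    using assms by (simp add: mult_assoc)
  also have "\<dots> = iv y \<cdot> (y \<cdot> iv y \<cdot> (iv x \<cdot> x)) \<cdot> iv x" using c by simp
  also have "\<dots> = (iv y \<cdot> (y \<cdot> iv y)) \<cdot> (iv x \<cdot> (x \<cdot> iv x))" using assms by (simp add: mult_assoc)
  finally show "iv y \<cdot> iv x \<cdot> (x \<cdot> y) \<cdot> (iv y \<cdot> iv x) = iv y \<cdot> iv x"
    using sinv_mult_sinv' assms by simp
qed (use assms in auto)

lemma conj_idem:
  assumes "x \<in> C" "e \<in> idems C m"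
  shows "x \<cdot> e \<cdot> iv x \<in> idems C m"
proof (rule idemsI)
  have eC: "e \<in> C" "e \<cdot> e = e" using assms(2) by (auto dest: idemsD)
  have c: "e \<cdot> (iv x \<cdot> x) = iv x \<cdot> x \<cdot> e"
    using idems_commute assms sinv_mult_idem by blast
  have "x \<cdot> e \<cdot> iv x \<cdot> (x \<cdot> e \<cdot> iv x) = x \<cdot> (e \<cdot> (iv x \<cdot> x)) \<cdot> e \<cdot> iv x"
    using assms eC by (simp add: mult_assoc)
  also have "\<dots> = (x \<cdot> (iv x \<cdot> x)) \<cdot> (e \<cdot> e) \<cdot> iv x"
    unfolding c using assms eC by (simp add: mult_assoc)
  finally show "x \<cdot> e \<cdot> iv x \<cdot> (x \<cdot> e \<cdot> iv x) = x \<cdot> e \<cdot> iv x"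
    using mult_sinv_mult' assms eC by simp
qed (use assms idemsD in auto)

lemma endo_sinv:
  assumes "endo C m \<phi>" "x \<in> C"
  shows "\<phi> (iv x) = iv (\<phi> x)"
proof -
  have hom: "\<And>a b. a \<in> C \<Longrightarrow> b \<in> C \<Longrightarrow> \<phi> (a \<cdot> b) = \<phi> a \<cdot> \<phi> b"
    and closed: "\<And>a. a \<in> C \<Longrightarrow> \<phi> a \<in> C"
    using assms(1) unfolding endo_def by auto
  have "\<phi> x \<cdot> \<phi> (iv x) \<cdot> \<phi> x = \<phi> x" and "\<phi> (iv x) \<cdot> \<phi> x \<cdot> \<phi> (iv x) = \<phi> (iv x)"
    using assms(2) by (simp_all flip: hom)
  then show ?thesis
    using sinv_unique[OF closed[OF assms(2)] closed[OF sinv_closed[OF assms(2)]]] by simp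
qed

end

locale semilattice_of_groups_on = inverse_semigroup_on +
  assumes central: "e \<in> idems C m \<Longrightarrow> x \<in> C \<Longrightarrow> e \<cdot> x = x \<cdot> e"
begin

abbreviation gp :: "'a \<Rightarrow> 'a set" where "gp \<equiv> group_part C m"

lemma mult_sinv_commute:
  assumes "x \<in> C"
  shows "x \<cdot> iv x = iv x \<cdot> x"
proof -
  have e: "iv x \<cdot> x \<in> idems C m" and f: "x \<cdot> iv x \<in> idems C m"
    using assms mult_sinv_idem sinv_mult_idem by auto
  have "x \<cdot> iv x = (x \<cdot> (iv x \<cdot> x)) \<cdot> iv x" using mult_sinv_mult' assms by simp
  also have "\<dots> = ((iv x \<cdot> x) \<cdot> x) \<cdot> iv x" using central[OF e, of x] assms by simp
  also have "\<dots> = (iv x \<cdot> x) \<cdot> (x \<cdot> iv x)" using assms by (simp add: mult_assoc)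
  finally have 1: "x \<cdot> iv x = (iv x \<cdot> x) \<cdot> (x \<cdot> iv x)" .
  have "iv x \<cdot> x = (iv x \<cdot> (x \<cdot> iv x)) \<cdot> x" using sinv_mult_sinv' assms by simp
  also have "\<dots> = ((x \<cdot> iv x) \<cdot> iv x) \<cdot> x" using central[OF f, of "iv x"] assms by simp
  also have "\<dots> = (x \<cdot> iv x) \<cdot> (iv x \<cdot> x)" using assms by (simp add: mult_assoc)
  finally show ?thesis using 1 idems_commute[OF e f] by simp
qed

lemma group_partD: "x \<in> gp e \<Longrightarrow> x \<in> C \<and> x \<cdot> iv x = e \<and> iv x \<cdot> x = e"
  by (simp add: group_part_def)

lemma group_partI: "x \<in> C \<Longrightarrow> x \<cdot> iv x = e \<Longrightarrow> x \<in> gp e"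
  using mult_sinv_commute by (auto simp: group_part_def)

lemma group_part_idem: "x \<in> gp e \<Longrightarrow> e \<in> idems C m"
  using group_partD mult_sinv_idem by metis

lemma group_part_left_unit: "x \<in> gp e \<Longrightarrow> e \<cdot> x = x"
  using group_partD mult_sinv_mult by metis

lemma group_part_right_unit: "x \<in> gp e \<Longrightarrow> x \<cdot> e = x"
  using group_partD mult_sinv_mult' by metis

lemma group_part_sinv: "x \<in> gp e \<Longrightarrow> iv x \<in> gp e"
  by (simp add: group_part_def)

lemma idem_group_part: "e \<in> idems C m \<Longrightarrow> e \<in> gp e"
  using sinv_idem idemsD by (simp add: group_part_def)

lemma group_part_mult:
  assumes x: "x \<in> gp e" and y: "y \<in> gp f"
  shows "x \<cdot> y \<in> gp (e \<cdot> f)"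
proof (rule group_partI)
  have xC: "x \<in> C" and yC: "y \<in> C" using x y group_partD by auto
  have ei: "e \<in> idems C m" "f \<in> idems C m" using x y group_part_idem by auto
  have "x \<cdot> y \<cdot> iv (x \<cdot> y) = x \<cdot> (y \<cdot> iv y) \<cdot> iv x"
    using xC yC by (simp add: sinv_mult mult_assoc)
  also have "\<dots> = (f \<cdot> x) \<cdot> iv x" using y group_partD central[OF ei(2) xC] by simp
  also have "\<dots> = f \<cdot> (x \<cdot> iv x)" using xC ei by (simp add: mult_assoc idemsD)
  also have "\<dots> = e \<cdot> f" using x group_partD idems_commute ei by metis
  finally show "x \<cdot> y \<cdot> iv (x \<cdot> y) = e \<cdot> f" .
qed (use assms group_partD in auto)

lemma group_part_eq_sinv:
  assumes x: "x \<in> gp e" and y: "y \<in> gp e" and xyx: "x \<cdot> y \<cdot> x = x"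
  shows "x = iv y"
proof -
  have xC: "x \<in> C" and yC: "y \<in> C" using x y group_partD by auto
  have "iv x \<cdot> (x \<cdot> y \<cdot> x) \<cdot> iv x = (iv x \<cdot> x) \<cdot> y \<cdot> (x \<cdot> iv x)"
    using xC yC by (simp add: mult_assoc)
  also have "\<dots> = y"
    using group_partD[OF x] group_part_left_unit[OF y] group_part_right_unit[OF y] by simp
  finally have "y = iv x" using xyx xC by simp
  then show ?thesis using xC by simp
qed

lemma endo_group_part:
  assumes "endo C m \<phi>" "x \<in> gp e"
  shows "\<phi> x \<in> gp (\<phi> e)"
proof (rule group_partI)
  have xC: "x \<in> C" using assms group_partD by auto
  then show "\<phi> x \<in> C" using assms(1) unfolding endo_def by auto
  have "\<phi> x \<cdot> iv (\<phi> x) = \<phi> (x \<cdot> iv x)"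
    using endo_sinv[OF assms(1) xC] assms(1) xC unfolding endo_def by simp
  then show "\<phi> x \<cdot> iv (\<phi> x) = \<phi> e" using group_partD[OF assms(2)] by simp
qed

end

locale twisted_module_on =
  fixes A :: "'a set" and mA :: "'a \<Rightarrow> 'a \<Rightarrow> 'a" (infixl "\<odot>" 70)
    and S :: "'s set" and mS :: "'s \<Rightarrow> 's \<Rightarrow> 's" (infixl "\<star>" 70)
    and \<alpha> :: "'s \<Rightarrow> 'a" and lam :: "'s \<Rightarrow> 'a \<Rightarrow> 'a" and f :: "'s \<Rightarrow> 's \<Rightarrow> 'a"
  assumes semilattice_of_groups_A: "semilattice_of_groups A mA"
    and inverse_semigroup_S: "inverse_semigroup S mS"
    and twisted_module: "twisted_module A mA S mS \<alpha> lam f"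
begin

sublocale A: semilattice_of_groups_on A mA
  using semilattice_of_groups_A
  unfolding semilattice_of_groups_def semilattice_of_groups_on_def
    semilattice_of_groups_on_axioms_def inverse_semigroup_on_def
  by auto

sublocale S: inverse_semigroup_on S mS
  using inverse_semigroup_S by (simp add: inverse_semigroup_on_def)

abbreviation "iA \<equiv> sinv A mA"
abbreviation "iS \<equiv> sinv S mS"
abbreviation "EA \<equiv> idems A mA"
abbreviation "ES \<equiv> idems S mS"

lemma alpha_bij: "bij_betw \<alpha> ES EA"
  using twisted_module unfolding twisted_module_def by blast

lemma alpha_idems: "e \<in> ES \<Longrightarrow> \<alpha> e \<in> EA"
  using alpha_bij bij_betwE by blast

lemma alpha_closed [simp]: "e \<in> ES \<Longrightarrow> \<alpha> e \<in> A"
  using alpha_idems A.idemsD by blast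

lemma alpha_idem: "e \<in> ES \<Longrightarrow> \<alpha> e \<odot> \<alpha> e = \<alpha> e"
  using alpha_idems A.idemsD by blast

lemma alpha_mult: "e \<in> ES \<Longrightarrow> e' \<in> ES \<Longrightarrow> \<alpha> (e \<star> e') = \<alpha> e \<odot> \<alpha> e'"
  using twisted_module unfolding twisted_module_def by blast

lemma inv_into_alpha: "e \<in> ES \<Longrightarrow> inv_into ES \<alpha> (\<alpha> e) = e"
  using alpha_bij bij_betw_inv_into_left by metis

lemma alpha_inv_into: "x \<in> EA \<Longrightarrow> inv_into ES \<alpha> x \<in> ES \<and> \<alpha> (inv_into ES \<alpha> x) = x"
  using alpha_bij by (metis bij_betw_def inv_into_into f_inv_into_f)

lemma lam_endo: "s \<in> S \<Longrightarrow> endo A mA (lam s)"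
  using twisted_module unfolding twisted_module_def rel_invertible_def by blast

lemma lam_closed [simp]: "s \<in> S \<Longrightarrow> a \<in> A \<Longrightarrow> lam s a \<in> A"
  using lam_endo unfolding endo_def by blast

lemma lam_mult: "s \<in> S \<Longrightarrow> a \<in> A \<Longrightarrow> b \<in> A \<Longrightarrow> lam s (a \<odot> b) = lam s a \<odot> lam s b"
  using lam_endo unfolding endo_def by blast

lemma f_group_part: "s \<in> S \<Longrightarrow> t \<in> S \<Longrightarrow> f s t \<in> A.gp (\<alpha> (s \<star> t \<star> iS t \<star> iS s))"
  using twisted_module unfolding twisted_module_def by blast

lemma f_closed [simp]: "s \<in> S \<Longrightarrow> t \<in> S \<Longrightarrow> f s t \<in> A"
  using f_group_part A.group_partD by blast

lemma lam_idem: "e \<in> ES \<Longrightarrow> a \<in> A \<Longrightarrow> lam e a = \<alpha> e \<odot> a"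
  using twisted_module unfolding twisted_module_def by blast

lemma lam_alpha: "s \<in> S \<Longrightarrow> e \<in> ES \<Longrightarrow> lam s (\<alpha> e) = \<alpha> (s \<star> e \<star> iS s)"
  using twisted_module unfolding twisted_module_def by blast

lemma lam_lam: "s \<in> S \<Longrightarrow> t \<in> S \<Longrightarrow> a \<in> A \<Longrightarrow>
    lam s (lam t a) = f s t \<odot> lam (s \<star> t) a \<odot> iA (f s t)"
  using twisted_module unfolding twisted_module_def by blast

lemma f_mult_idem_idem: "s \<in> S \<Longrightarrow> e \<in> ES \<Longrightarrow> f (s \<star> e) e = \<alpha> (s \<star> e \<star> iS s)"
  using twisted_module unfolding twisted_module_def by blast

lemma f_idem_idem_mult: "s \<in> S \<Longrightarrow> e \<in> ES \<Longrightarrow> f e (e \<star> s) = \<alpha> (e \<star> s \<star> iS s)"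
  using twisted_module unfolding twisted_module_def by blast

lemma f_cocycle: "s \<in> S \<Longrightarrow> t \<in> S \<Longrightarrow> u \<in> S \<Longrightarrow>
    lam s (f t u) \<odot> f s (t \<star> u) = f s t \<odot> f (s \<star> t) u"
  using twisted_module unfolding twisted_module_def by blast

lemma idems_S_closed [simp]: "e \<in> ES \<Longrightarrow> e \<in> S"
  using S.idemsD by blast

lemma idems_S_idem: "e \<in> ES \<Longrightarrow> e \<star> e = e"
  using S.idemsD by blast

lemma mult_sinv_idems_S [simp]: "s \<in> S \<Longrightarrow> s \<star> iS s \<in> ES"
  using S.mult_sinv_idem by blast

lemma sinv_mult_idems_S [simp]: "s \<in> S \<Longrightarrow> iS s \<star> s \<in> ES"
  using S.sinv_mult_idem by blast

lemma conj_idems_S [simp]: "s \<in> S \<Longrightarrow> e \<in> ES \<Longrightarrow> s \<star> e \<star> iS s \<in> ES"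
  using S.conj_idem by blast

lemma f_s_sinv_group_part: "s \<in> S \<Longrightarrow> f s (iS s) \<in> A.gp (\<alpha> (s \<star> iS s))"
  using f_group_part[of s "iS s"] by simp

lemma f_sinv_s_group_part: "s \<in> S \<Longrightarrow> f (iS s) s \<in> A.gp (\<alpha> (iS s \<star> s))"
  using f_group_part[of "iS s" s] by simp

lemma f_s_sinv_mult: "s \<in> S \<Longrightarrow> f s (iS s \<star> s) = \<alpha> (s \<star> iS s)"
  using f_mult_idem_idem[of s "iS s \<star> s"] by (simp add: S.mult_sinv_mult')

lemma f_mult_sinv_s: "s \<in> S \<Longrightarrow> f (s \<star> iS s) s = \<alpha> (s \<star> iS s)"
  using f_idem_idem_mult[of s "s \<star> iS s"] by simp

lemma f_sinv_mult_sinv: "s \<in> S \<Longrightarrow> f (iS s \<star> s) (iS s) = \<alpha> (iS s \<star> s)"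
  using f_idem_idem_mult[of "iS s" "iS s \<star> s"] by simp

text \<open>The cocycle identity at \<open>(s, s\<inverse>, s)\<close>, whose other factors are idempotents.\<close>
lemma lam_f_sinv_s:
  assumes s: "s \<in> S"
  shows "lam s (f (iS s) s) = f s (iS s)"
proof -
  have cocycle: "lam s (f (iS s) s) \<odot> f s (iS s \<star> s) = f s (iS s) \<odot> f (s \<star> iS s) s"
    using f_cocycle[of s "iS s" s] s by simp
  have "lam s (\<alpha> (iS s \<star> s)) = \<alpha> (s \<star> iS s)"
    using lam_alpha[of s "iS s \<star> s"] s by (simp add: S.mult_assoc S.mult_sinv_mult_cancel)
  then have gp: "lam s (f (iS s) s) \<in> A.gp (\<alpha> (s \<star> iS s))"
    using A.endo_group_part[OF lam_endo[OF s] f_sinv_s_group_part[OF s]] by simp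
  have "lam s (f (iS s) s) = lam s (f (iS s) s) \<odot> \<alpha> (s \<star> iS s)"
    using A.group_part_right_unit[OF gp] by simp
  also have "\<dots> = f s (iS s) \<odot> \<alpha> (s \<star> iS s)"
    using cocycle f_s_sinv_mult f_mult_sinv_s s by simp
  also have "\<dots> = f s (iS s)"
    using A.group_part_right_unit[OF f_s_sinv_group_part[OF s]] .
  finally show ?thesis .
qed

lemma lam_sinv_f_sinv_s: "s \<in> S \<Longrightarrow> lam s (iA (f (iS s) s)) = iA (f s (iS s))"
  using A.endo_sinv[OF lam_endo, of s "f (iS s) s"] lam_f_sinv_s by simp

abbreviation "CC \<equiv> cp_carrier A mA S mS \<alpha>"
abbreviation "mul \<equiv> cp_mult mA mS lam f"
abbreviation "incl \<equiv> cp_incl A mA S mS \<alpha>"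
abbreviation "rho s \<equiv> (\<alpha> (s \<star> iS s), s)"

lemma cp_mult_Pair: "mul (a, s) (b, t) = (a \<odot> lam s b \<odot> f s t, s \<star> t)"
  by (simp add: cp_mult_def)

lemma cp_carrier_Pair_iff: "(b, t) \<in> CC \<longleftrightarrow> b \<in> A \<and> t \<in> S \<and> b \<odot> iA b = \<alpha> (t \<star> iS t)"
  by (simp add: cp_carrier_def)

lemma cp_mult_sinv_rho:
  assumes s: "s \<in> S" and b: "b \<in> A.gp (\<alpha> (iS s \<star> s))"
  shows "mul (b, iS s) (rho s) = (b \<odot> f (iS s) s, iS s \<star> s)"
proof -
  have "lam (iS s) (\<alpha> (s \<star> iS s)) = \<alpha> (iS s \<star> s)"
    using lam_alpha[of "iS s" "s \<star> iS s"] s by (simp add: S.mult_assoc S.sinv_mult_sinv_cancel)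
  then show ?thesis
    using b s by (simp add: cp_mult_Pair A.group_part_right_unit)
qed

lemma cp_sinv_rho_unique:
  assumes s: "s \<in> S" and y: "y \<in> CC"
    and rho_y_rho: "mul (mul (rho s) y) (rho s) = rho s" and y_rho_y: "mul (mul y (rho s)) y = y"
  shows "y = (iA (f (iS s) s), iS s)"
proof -
  define G where "G = f (iS s) s"
  define E2 where "E2 = \<alpha> (iS s \<star> s)"
  have G: "G \<in> A.gp E2" and E2A: "E2 \<in> A"
    using f_sinv_s_group_part s G_def E2_def by simp_all
  obtain b t where bt: "y = (b, t)" by force
  have yC: "b \<in> A" "t \<in> S" "b \<odot> iA b = \<alpha> (t \<star> iS t)"
    using y bt cp_carrier_Pair_iff by auto
  have "iS s = t"
    using S.sinv_unique[OF s yC(2)] rho_y_rho y_rho_y bt by (simp add: cp_mult_Pair)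
  then have y': "y = (b, iS s)" and b: "b \<in> A.gp E2"
    using A.group_partI[OF yC(1) yC(3)] bt s E2_def by auto
  have "mul (mul y (rho s)) y = (b \<odot> G \<odot> (E2 \<odot> b) \<odot> E2, iS s)"
    using cp_mult_sinv_rho[OF s b[unfolded E2_def]] y' G_def s E2_def f_sinv_mult_sinv[OF s]
      lam_idem[of "iS s \<star> s" b] yC
    by (simp add: cp_mult_Pair)
  also have "\<dots> = (b \<odot> G \<odot> b, iS s)"
    using A.group_part_left_unit[OF b] A.group_part_right_unit[OF b]
      A.mult_assoc[of "b \<odot> G" b E2] G A.group_partD yC E2A
    by simp
  finally have "b \<odot> G \<odot> b = b" using y_rho_y y' by simp
  then show ?thesis
    using A.group_part_eq_sinv[OF b G] y' G_def by simp
qed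

lemma sinv_cp_rho:
  assumes s: "s \<in> S"
  shows "sinv CC mul (rho s) = (iA (f (iS s) s), iS s)"
proof (rule sinv_eqI)
  define G where "G = f (iS s) s"
  define F where "F = f s (iS s)"
  define E1 where "E1 = \<alpha> (s \<star> iS s)"
  define E2 where "E2 = \<alpha> (iS s \<star> s)"
  have G: "G \<in> A.gp E2" and F: "F \<in> A.gp E1"
    using f_sinv_s_group_part f_s_sinv_group_part s G_def F_def E1_def E2_def by simp_all
  have GA: "G \<in> A" and FA: "F \<in> A"
    using G F A.group_partD by auto
  have iG: "iA G \<in> A.gp E2" using A.group_part_sinv[OF G] .
  show "(iA G, iS s) \<in> CC"
    unfolding cp_carrier_Pair_iff using s A.group_partD[OF iG] GA E2_def by simp
  have "mul (rho s) (iA G, iS s) = (E1 \<odot> iA F \<odot> F, s \<star> iS s)"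
    unfolding cp_mult_Pair using lam_sinv_f_sinv_s s G_def F_def E1_def by simp
  also have "\<dots> = (E1, s \<star> iS s)"
    using A.group_partD[OF F] FA s E1_def alpha_idem by (simp add: A.mult_assoc)
  finally have rho_iG: "mul (rho s) (iA G, iS s) = (E1, s \<star> iS s)" .
  have "mul (E1, s \<star> iS s) (rho s) = rho s"
    unfolding cp_mult_Pair using s E1_def lam_idem f_mult_sinv_s alpha_idem by simp
  then show "mul (mul (rho s) (iA G, iS s)) (rho s) = rho s"
    using rho_iG by simp
  have iG_rho: "mul (iA G, iS s) (rho s) = (E2, iS s \<star> s)"
    using cp_mult_sinv_rho[OF s iG[unfolded E2_def]] A.group_partD[OF G] G_def E2_def GA by simp
  have "mul (E2, iS s \<star> s) (iA G, iS s) = (iA G, iS s)"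
    unfolding cp_mult_Pair
    using s E2_def lam_idem f_sinv_mult_sinv A.group_part_left_unit[OF iG]
      A.group_part_right_unit[OF iG] alpha_idem GA
    by (simp add: A.mult_assoc)
  then show "mul (mul (iA G, iS s) (rho s)) (iA G, iS s) = (iA G, iS s)"
    using iG_rho by simp
qed (rule cp_sinv_rho_unique[OF s])

lemma inj_on_cp_incl: "inj_on incl A"
  by (rule inj_onI) (simp add: cp_incl_def)

lemma cp_incl_group_part: "g \<in> ES \<Longrightarrow> x \<in> A.gp (\<alpha> g) \<Longrightarrow> incl x = (x, g)"
  using A.group_partD inv_into_alpha by (simp add: cp_incl_def)

lemma inv_into_cp_incl: "x \<in> A \<Longrightarrow> inv_into A incl (incl x) = x"
  using inv_into_f_f[OF inj_on_cp_incl] by blast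

lemma rho_idem: "e \<in> ES \<Longrightarrow> rho e = (\<alpha> e, e)"
  using S.sinv_idem idems_S_idem by simp

lemma rho_transversal: "transversal CC mul S mS snd rho"
  unfolding transversal_def
proof (intro conjI ballI subsetI)
  fix s assume s: "s \<in> S"
  then show "rho s \<in> CC"
    using A.sinv_idem[OF alpha_idems] alpha_idem by (simp add: cp_carrier_Pair_iff)
  show "snd (rho s) = s" by simp
next
  fix x assume "x \<in> rho ` ES"
  then obtain e where e: "e \<in> ES" and x: "x = (\<alpha> e, e)" using rho_idem by auto
  have "x \<in> CC"
    using x e A.sinv_idem[OF alpha_idems] alpha_idem S.sinv_idem idems_S_idem
    by (simp add: cp_carrier_Pair_iff)
  moreover have "f e e = \<alpha> e"
    using f_mult_idem_idem[of e e] e idems_S_idem S.sinv_idem by simp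
  then have "mul x x = x"
    unfolding x cp_mult_Pair using lam_idem e alpha_idem idems_S_idem by simp
  ultimately show "x \<in> idems CC mul" by (simp add: idems_def)
qed

lemma induced_alpha_rho: "e \<in> ES \<Longrightarrow> induced_alpha A incl rho e = \<alpha> e"
  using cp_incl_group_part[of e "\<alpha> e"] A.idem_group_part[OF alpha_idems] rho_idem
    inv_into_cp_incl[of "\<alpha> e"]
  by (simp add: induced_alpha_def)

lemma induced_f_rho:
  assumes s: "s \<in> S" and t: "t \<in> S"
  shows "induced_f A mA S mS CC mul incl rho s t = f s t"
proof -
  define u where "u = s \<star> t"
  define g where "g = u \<star> iS u"
  have u: "u \<in> S" and g: "g \<in> ES" using u_def g_def s t by simp_all
  have g_eq: "s \<star> t \<star> iS t \<star> iS s = g"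
    using s t unfolding g_def u_def by (simp add: S.sinv_mult S.mult_assoc)
  have fst: "f s t \<in> A.gp (\<alpha> g)" using f_group_part[OF s t] g_eq by simp
  have rho_rho: "mul (rho s) (rho t) = (f s t, u)"
  proof -
    have "lam s (\<alpha> (t \<star> iS t)) = \<alpha> g"
      using lam_alpha[OF s, of "t \<star> iS t"] t g_eq s by (simp add: S.mult_assoc)
    moreover have "s \<star> iS s \<star> g = g"
      using s t unfolding g_def u_def by (simp add: S.sinv_mult S.mult_assoc S.mult_sinv_mult_cancel)
    then have "\<alpha> (s \<star> iS s) \<odot> \<alpha> g = \<alpha> g"
      using alpha_mult[of "s \<star> iS s" g] s g by simp
    ultimately show ?thesis
      unfolding cp_mult_Pair u_def using A.group_part_left_unit[OF fst] s t g by (simp add: A.mult_assoc)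
  qed
  have incl_rho: "mul (incl x) (rho (s \<star> t)) = (x, u)" if x: "x \<in> A.gp (\<alpha> g)" for x
  proof -
    have "g \<star> u = u" using u unfolding g_def by simp
    moreover have "f g u = \<alpha> g" using f_idem_idem_mult[OF u g] \<open>g \<star> u = u\<close> g_def by simp
    moreover have "lam g (\<alpha> g) = \<alpha> g" using lam_idem g alpha_idem by simp
    ultimately show ?thesis
      unfolding cp_incl_group_part[OF g x] u_def[symmetric] g_def[symmetric] cp_mult_Pair
      using A.group_part_right_unit[OF x] alpha_idem g A.group_partD[OF x]
      by (simp add: A.mult_assoc)
  qed
  have "induced_alpha A incl rho (s \<star> t \<star> iS t \<star> iS s) = \<alpha> g"
    using induced_alpha_rho[OF g] g_eq by simp
  then show ?thesis
    unfolding induced_f_def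
    using fst rho_rho incl_rho by (intro the_equality) auto
qed

lemma alpha_mult_conj:
  assumes s: "s \<in> S" and e: "e \<in> ES"
  shows "\<alpha> (s \<star> iS s) \<odot> \<alpha> (s \<star> e \<star> iS s) = \<alpha> (s \<star> e \<star> iS s)"
    and "\<alpha> (s \<star> e \<star> iS s) \<odot> \<alpha> (s \<star> iS s) = \<alpha> (s \<star> e \<star> iS s)"
proof -
  have "s \<star> iS s \<star> (s \<star> e \<star> iS s) = s \<star> e \<star> iS s"
    using s e by (simp add: S.mult_assoc S.mult_sinv_mult_cancel)
  then show "\<alpha> (s \<star> iS s) \<odot> \<alpha> (s \<star> e \<star> iS s) = \<alpha> (s \<star> e \<star> iS s)"
    using alpha_mult[of "s \<star> iS s" "s \<star> e \<star> iS s"] s e by simp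
  have "s \<star> e \<star> iS s \<star> (s \<star> iS s) = s \<star> e \<star> iS s"
    using s e by (simp add: S.mult_assoc S.sinv_mult_sinv')
  then show "\<alpha> (s \<star> e \<star> iS s) \<odot> \<alpha> (s \<star> iS s) = \<alpha> (s \<star> e \<star> iS s)"
    using alpha_mult[of "s \<star> e \<star> iS s" "s \<star> iS s"] s e by simp
qed

lemma f_s_idem_group_part:
  assumes s: "s \<in> S" and e: "e \<in> ES"
  shows "f s e \<in> A.gp (\<alpha> (s \<star> e \<star> iS s))"
  using f_group_part[OF s idems_S_closed[OF e]] S.sinv_idem[OF e] idems_S_idem[OF e] s e
  by (simp add: S.mult_assoc)

lemma f_mult_idem_sinv_group_part:
  assumes s: "s \<in> S" and e: "e \<in> ES"
  shows "f (s \<star> e) (iS s) \<in> A.gp (\<alpha> (s \<star> e \<star> iS s))"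
proof -
  have "s \<star> e \<star> iS s \<star> iS (iS s) \<star> iS (s \<star> e) = (s \<star> e \<star> iS s) \<star> (s \<star> e \<star> iS s)"
    using s e S.sinv_idem[OF e] by (simp add: S.sinv_mult S.mult_assoc)
  also have "\<dots> = s \<star> e \<star> iS s"
    using S.idemsD[OF conj_idems_S[OF s e]] by simp
  finally show ?thesis
    using f_group_part[of "s \<star> e" "iS s"] s e by simp
qed

text \<open>
  Both sides equal \<open>\<lambda>\<^sub>s(\<lambda>\<^sub>e(f(s\<inverse>,s)\<inverse>)) f(s,e)\<close>: on the left by the twisting rule
  for \<open>\<lambda>\<^sub>s\<lambda>\<^sub>e\<close>, on the right since \<open>\<lambda>\<^sub>e\<close> multiplies by \<open>\<alpha>(e)\<close> and
  \<open>\<lambda>\<^sub>s(f(s\<inverse>,s)) = f(s,s\<inverse>)\<close>.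
\<close>
lemma f_lam_sinv_f:
  assumes s: "s \<in> S" and e: "e \<in> ES"
  shows "f s e \<odot> lam (s \<star> e) (iA (f (iS s) s)) = \<alpha> (s \<star> e \<star> iS s) \<odot> iA (f s (iS s)) \<odot> f s e"
proof -
  define G where "G = f (iS s) s"
  define E' where "E' = \<alpha> (s \<star> e \<star> iS s)"
  define Y where "Y = lam (s \<star> e) (iA G)"
  have GA: "G \<in> A" and E'A: "E' \<in> A" and YA: "Y \<in> A" and fA: "f s e \<in> A"
    using G_def E'_def Y_def s e by simp_all
  have fse: "f s e \<in> A.gp E'" using f_s_idem_group_part[OF s e] E'_def by simp
  have "lam s (lam e (iA G)) = f s e \<odot> Y \<odot> iA (f s e)"
    using lam_lam[OF s idems_S_closed[OF e], of "iA G"] GA Y_def by simp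
  moreover have "lam s (lam e (iA G)) = E' \<odot> iA (f s (iS s))"
    using lam_idem[OF e] lam_mult[OF s, of "\<alpha> e" "iA G"] e GA lam_alpha[OF s e]
      lam_sinv_f_sinv_s[OF s] E'_def G_def
    by simp
  ultimately have conj: "f s e \<odot> Y \<odot> iA (f s e) = E' \<odot> iA (f s (iS s))" by simp
  have "f s e \<odot> Y = f s e \<odot> (E' \<odot> Y)"
    using A.group_part_right_unit[OF fse] A.mult_assoc[OF fA E'A YA] by simp
  also have "\<dots> = f s e \<odot> Y \<odot> E'"
    using A.central[OF _ YA] A.group_part_idem[OF fse] A.mult_assoc[OF fA YA E'A] by simp
  also have "\<dots> = f s e \<odot> Y \<odot> (iA (f s e) \<odot> f s e)"
    using A.group_partD[OF fse] by simp
  also have "\<dots> = E' \<odot> iA (f s (iS s)) \<odot> f s e"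
    using conj fA YA A.mult_assoc[of "f s e \<odot> Y" "iA (f s e)" "f s e"] by simp
  finally show ?thesis unfolding Y_def G_def E'_def .
qed

lemma rho_conj:
  assumes s: "s \<in> S" and e: "e \<in> ES" and a: "a \<in> A.gp (\<alpha> e)"
  shows "mul (mul (rho s) (a, e)) (sinv CC mul (rho s)) =
    (lam s a \<odot> iA (f s (iS s)) \<odot> f s e \<odot> f (s \<star> e) (iS s), s \<star> e \<star> iS s)"
proof -
  define E1 where "E1 = \<alpha> (s \<star> iS s)"
  define E' where "E' = \<alpha> (s \<star> e \<star> iS s)"
  define Y where "Y = lam (s \<star> e) (iA (f (iS s) s))"
  have aA: "a \<in> A" using a A.group_partD by blast
  have E1A: "E1 \<in> A" and E'A: "E' \<in> A" and YA: "Y \<in> A" and FA: "f s (iS s) \<in> A"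
    using E1_def E'_def Y_def s e by simp_all
  have la: "lam s a \<in> A.gp E'"
    using A.endo_group_part[OF lam_endo[OF s] a] lam_alpha[OF s e] E'_def by simp
  have "mul (mul (rho s) (a, e)) (sinv CC mul (rho s)) =
      (E1 \<odot> lam s a \<odot> f s e \<odot> Y \<odot> f (s \<star> e) (iS s), s \<star> e \<star> iS s)"
    unfolding sinv_cp_rho[OF s] cp_mult_Pair Y_def E1_def by simp
  also have "E1 \<odot> lam s a \<odot> f s e \<odot> Y = E1 \<odot> lam s a \<odot> (f s e \<odot> Y)"
    using E1A s aA e YA by (simp add: A.mult_assoc)
  also have "\<dots> = E1 \<odot> (lam s a \<odot> E') \<odot> iA (f s (iS s)) \<odot> f s e"
    unfolding Y_def f_lam_sinv_f[OF s e] E'_def[symmetric]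
    using E1A s aA e E'A FA by (simp add: A.mult_assoc)
  also have "\<dots> = E1 \<odot> (E' \<odot> lam s a) \<odot> iA (f s (iS s)) \<odot> f s e"
    using A.group_part_left_unit[OF la] A.group_part_right_unit[OF la] by simp
  also have "\<dots> = lam s a \<odot> iA (f s (iS s)) \<odot> f s e"
    using A.group_part_left_unit[OF la] A.mult_assoc[OF E1A E'A, of "lam s a"]
      alpha_mult_conj(1)[OF s e] E1_def E'_def s aA
    by simp
  finally show ?thesis .
qed

lemma rho_conj_group_part:
  assumes s: "s \<in> S" and e: "e \<in> ES" and a: "a \<in> A.gp (\<alpha> e)"
  shows "lam s a \<odot> iA (f s (iS s)) \<odot> f s e \<odot> f (s \<star> e) (iS s) \<in> A.gp (\<alpha> (s \<star> e \<star> iS s))"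
proof -
  define E' where "E' = \<alpha> (s \<star> e \<star> iS s)"
  have E'E': "E' \<odot> E' = E'" using E'_def s e alpha_idem by simp
  have "lam s a \<in> A.gp E'"
    using A.endo_group_part[OF lam_endo[OF s] a] lam_alpha[OF s e] E'_def by simp
  then have "lam s a \<odot> iA (f s (iS s)) \<in> A.gp E'"
    using A.group_part_mult[OF _ A.group_part_sinv[OF f_s_sinv_group_part[OF s]]]
      alpha_mult_conj(2)[OF s e] E'_def
    by metis
  then have "lam s a \<odot> iA (f s (iS s)) \<odot> f s e \<in> A.gp E'"
    using A.group_part_mult[OF _ f_s_idem_group_part[OF s e]] E'E' E'_def by metis
  then show ?thesis
    using A.group_part_mult[OF _ f_mult_idem_sinv_group_part[OF s e]] E'E' E'_def by metis
qed

lemma induced_lambda_rho: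
  assumes s: "s \<in> S" and a: "a \<in> A"
  shows "induced_lambda A CC mul incl rho s a =
    (let e = inv_into ES \<alpha> (a \<odot> iA a) in
       lam s a \<odot> iA (f s (iS s)) \<odot> f s e \<odot> f (s \<star> e) (iS s))"
proof -
  define e where "e = inv_into ES \<alpha> (a \<odot> iA a)"
  have e: "e \<in> ES" and "\<alpha> e = a \<odot> iA a"
    using alpha_inv_into[OF A.mult_sinv_idem[OF a]] e_def by auto
  then have ae: "a \<in> A.gp (\<alpha> e)" using A.group_partI[OF a] by simp
  show ?thesis
    unfolding induced_lambda_def cp_incl_group_part[OF e ae] rho_conj[OF s e ae]
      cp_incl_group_part[OF conj_idems_S[OF s e] rho_conj_group_part[OF s e ae], symmetric]
    using inv_into_cp_incl rho_conj_group_part[OF s e ae] A.group_partD e_def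
    by (simp add: Let_def)
qed

end

theorem proposition3p19:
  fixes A :: "'a set" and mA :: "'a \<Rightarrow> 'a \<Rightarrow> 'a"
    and S :: "'s set" and mS :: "'s \<Rightarrow> 's \<Rightarrow> 's"
    and \<alpha> :: "'s \<Rightarrow> 'a" and lam :: "'s \<Rightarrow> 'a \<Rightarrow> 'a" and f :: "'s \<Rightarrow> 's \<Rightarrow> 'a"
  assumes "semilattice_of_groups A mA"
    and "inverse_semigroup S mS"
    and "twisted_module A mA S mS \<alpha> lam f"
  defines "C \<equiv> cp_carrier A mA S mS \<alpha>"
    and "mC \<equiv> cp_mult mA mS lam f"
    and "i \<equiv> cp_incl A mA S mS \<alpha>"
    and "\<rho> \<equiv> (\<lambda>s. (\<alpha> (mS s (sinv S mS s)), s))"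
  shows "transversal C mC S mS snd \<rho> \<and>
    (\<forall>e\<in>idems S mS. induced_alpha A i \<rho> e = \<alpha> e) \<and>
    (\<forall>s\<in>S. \<forall>a\<in>A. induced_lambda A C mC i \<rho> s a =
        (let e = inv_into (idems S mS) \<alpha> (mA a (sinv A mA a)) in
         mA (mA (mA (lam s a) (sinv A mA (f s (sinv S mS s)))) (f s e))
            (f (mS s e) (sinv S mS s)))) \<and>
    (\<forall>s\<in>S. \<forall>t\<in>S. induced_f A mA S mS C mC i \<rho> s t = f s t)"
proof -
  interpret twisted_module_on A mA S mS \<alpha> lam f
    using assms(1-3) by (simp add: twisted_module_on_def)
  show ?thesis
    unfolding C_def mC_def i_def \<rho>_def
    using rho_transversal induced_alpha_rho induced_lambda_rho induced_f_rho
    by blast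
qed

end
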